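(* Consider any divide-and-conquer algorithm for computing $\mu(\cdot)$ on $n$-column matrices of $O(k)$-bit integers, i.e. an assignment of an output (bit string) $s(A)$ to each such matrix $A$ (a sub-problem) together with a join such that for any two such matrices $A_0,A_1$, the output for their vertical concatenation $A_{01}$ ($A_0$'s rows followed by $A_1$'s rows) is computed by the join from $s(A_0)$ and $s(A_1)$ alone, and $\mu(A)$ is determined by $s(A)$. Then for every $r\le n(n+1)/2$, the output of a sub-problem of $r$ rows has size $\Omega(kr)$ bits (in the worst case over $r$-row matrices). In particular, solutions to sub-problems of size $O(n^2)$ require $\Omega(kn^2)$ bits.
   Context: For integers $i\le j$, $[i:j]=\{i,\dots,j\}$; $\mathbb{I}_n=\{[i:j]:1\le i\le j\le n\}$. For a matrix $A=[a_{ij}]$ with $n$ columns, $\mu_A(J)=\max_{k'\ge1}\sum_{i=1}^{k'}\sum_{j\in J}a_{ij}$ (maximum over row indices $k'$) for $J\in\mathbb{I}_n$, and the maximum top subarray sum of $A$ is $\mu(A)=\max_{J\in\mathbb{I}_n}\mu_A(J)$. *)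

theory Defs
  imports Complex_Main
begin

text \<open>A matrix with n columns is a non-empty list of rows (row 1 first), each row an
  int list of length n. Columns are indexed 1..n, so entry a_{ij} is (A!(i-1))!(j-1).\<close>

definition valid_matrix :: "nat \<Rightarrow> nat \<Rightarrow> int list list \<Rightarrow> bool" where
  "valid_matrix n b A \<longleftrightarrow> A \<noteq> [] \<and>
     (\<forall>row\<in>set A. length row = n \<and> (\<forall>x\<in>set row. \<bar>x\<bar> < 2 ^ b))"

definition row_int_sum :: "int list \<Rightarrow> nat \<Rightarrow> nat \<Rightarrow> int" where
  "row_int_sum row i j = (\<Sum>j'\<in>{i..j}. row ! (j' - 1))"

definition mu_J :: "int list list \<Rightarrow> nat \<Rightarrow> nat \<Rightarrow> int" where
  "mu_J A i j = Max {(\<Sum>t<k'. row_int_sum (A ! t) i j) | k'. 1 \<le> k' \<and> k' \<le> length A}"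

definition mu :: "nat \<Rightarrow> int list list \<Rightarrow> int" where
  "mu n A = Max {mu_J A i j | i j. 1 \<le> i \<and> i \<le> j \<and> j \<le> n}"

definition divide_conquer ::
  "nat \<Rightarrow> nat \<Rightarrow> (int list list \<Rightarrow> bool list) \<Rightarrow> (bool list \<Rightarrow> bool list \<Rightarrow> bool list) \<Rightarrow> bool" where
  "divide_conquer n b s join \<longleftrightarrow>
     (\<forall>A0 A1. valid_matrix n b A0 \<longrightarrow> valid_matrix n b A1 \<longrightarrow>
        s (A0 @ A1) = join (s A0) (s A1)) \<and>
     (\<forall>A A'. valid_matrix n b A \<longrightarrow> valid_matrix n b A' \<longrightarrow> s A = s A' \<longrightarrow> mu n A = mu n A')"

end

theory Submission
  imports Defs "HOL-Library.FuncSet"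
begin

(* A fooling-set argument. Choose r distinct column intervals and digits x_0, ..., x_(r-1) < 2^k,
   and let A_x be the r-row matrix whose top s rows sum to 2 * 2^k + x_(s-1) over the (s-1)-th
   interval and to less than 2 * 2^k over every other interval. A single probe row worth 4 * 2^k
   over the t-th interval and at most 2 * 2^k over any other one, placed on top of A_x, yields
   mu = 6 * 2^k + x_t. As the join only sees the outputs of the two parts, the output of A_x
   determines every digit x_t; so the 2^(k r) matrices A_x have pairwise distinct outputs and one
   of them needs at least k r bits. The entries stay below 2^(5 k). *)

abbreviation top_sum :: "int list list \<Rightarrow> nat \<Rightarrow> nat \<Rightarrow> nat \<Rightarrow> int" where
  "top_sum A k i j \<equiv> \<Sum>t<k. row_int_sum (A ! t) i j"

lemma top_sum_Cons: "top_sum (row # A) (Suc k) i j = row_int_sum row i j + top_sum A k i j"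
  unfolding sum.lessThan_Suc_shift by simp

lemma mu_J_eq_Max_image: "mu_J A i j = Max ((\<lambda>k. top_sum A k i j) ` {1..length A})"
  unfolding mu_J_def by (rule arg_cong[where f = Max]) auto

lemma mu_eq_Max_image:
  "mu n A = Max ((\<lambda>(i, j). mu_J A i j) ` {(i, j). 1 \<le> i \<and> i \<le> j \<and> j \<le> n})"
  unfolding mu_def by (rule arg_cong[where f = Max]) auto

lemma mu_eqI:
  assumes "A \<noteq> []"
    and le: "\<And>k i j. 1 \<le> k \<Longrightarrow> k \<le> length A \<Longrightarrow> 1 \<le> i \<Longrightarrow> i \<le> j \<Longrightarrow> j \<le> n \<Longrightarrow>
      top_sum A k i j \<le> V"
    and attained: "1 \<le> k'" "k' \<le> length A" "1 \<le> i'" "i' \<le> j'" "j' \<le> n"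
      "top_sum A k' i' j' = V"
  shows "mu n A = V"
proof -
  have rows: "{1..length A} \<noteq> {}"
    using assms(1) by (simp add: Suc_le_eq)
  have mu_J_le: "mu_J A i j \<le> V" if "1 \<le> i" "i \<le> j" "j \<le> n" for i j
    unfolding mu_J_eq_Max_image using rows le that by (simp add: Max_le_iff)
  have "V \<le> mu_J A i' j'"
    unfolding mu_J_eq_Max_image using attained by (intro Max_ge) auto
  then have mu_J_attained: "mu_J A i' j' = V"
    using mu_J_le attained by force
  have "finite {(i, j). 1 \<le> i \<and> i \<le> j \<and> j \<le> n}"
    by (rule finite_subset[of _ "{..n} \<times> {..n}"]) auto
  then show ?thesis
    unfolding mu_eq_Max_image
    by (rule Max_eqI[OF finite_imageI]) (use mu_J_le mu_J_attained attained in auto)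
qed

lemma valid_matrix_append:
  "valid_matrix n b A \<Longrightarrow> valid_matrix n b B \<Longrightarrow> valid_matrix n b (A @ B)"
  by (auto simp: valid_matrix_def)

definition row_of_prefix :: "nat \<Rightarrow> (nat \<Rightarrow> int) \<Rightarrow> int list" where
  "row_of_prefix n g = map (\<lambda>j. g j - g (j - 1)) [1..<Suc n]"

lemma row_int_sum_row_of_prefix:
  assumes "1 \<le> i" "i \<le> j" "j \<le> n"
  shows "row_int_sum (row_of_prefix n g) i j = g j - g (i - 1)"
proof -
  have "row_int_sum (row_of_prefix n g) i j = (\<Sum>l\<in>{Suc (i - 1)..Suc (j - 1)}. g l - g (l - 1))"
    unfolding row_int_sum_def using assms
    by (intro sum.cong) (auto simp: row_of_prefix_def nth_map simp del: upt_Suc)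
  also have "\<dots> = (\<Sum>l = i - 1..j - 1. g (Suc l) - g l)"
    by (simp only: sum.shift_bounds_cl_Suc_ivl) simp
  also have "\<dots> = g j - g (i - 1)"
    using assms by (subst sum_Suc_diff) auto
  finally show ?thesis .
qed

lemma abs_le_row_of_prefix:
  assumes "\<And>m. \<bar>g m\<bar> \<le> K" "y \<in> set (row_of_prefix n g)"
  shows "\<bar>y\<bar> \<le> 2 * K"
proof -
  from assms(2) obtain j where "y = g j - g (j - 1)"
    by (auto simp: row_of_prefix_def)
  then show ?thesis
    using assms(1)[of j] assms(1)[of "j - 1"] by linarith
qed

lemma valid_matrix_row_of_prefix:
  assumes "\<And>m. \<bar>g m\<bar> \<le> K" "2 * K < 2 ^ b"
  shows "valid_matrix n b [row_of_prefix n g]"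
  unfolding valid_matrix_def
proof (intro conjI ballI)
  fix row y assume "row \<in> set [row_of_prefix n g]" "y \<in> set row"
  then have "\<bar>y\<bar> \<le> 2 * K"
    using abs_le_row_of_prefix[OF assms(1)] by simp
  then show "\<bar>y\<bar> < 2 ^ b"
    using assms(2) by linarith
qed (auto simp: row_of_prefix_def)

(* Q s m is the sum of the top s rows over the columns 1..m, up to a term depending on s only. *)
definition matrix_of_prefix :: "nat \<Rightarrow> nat \<Rightarrow> (nat \<Rightarrow> nat \<Rightarrow> int) \<Rightarrow> int list list" where
  "matrix_of_prefix n len Q = map (\<lambda>t. row_of_prefix n (\<lambda>m. Q (Suc t) m - Q t m)) [0..<len]"

lemma length_matrix_of_prefix [simp]: "length (matrix_of_prefix n len Q) = len"
  by (simp add: matrix_of_prefix_def)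

lemma top_sum_matrix_of_prefix:
  assumes "Q 0 = (\<lambda>_. 0)" "k \<le> len" "1 \<le> i" "i \<le> j" "j \<le> n"
  shows "top_sum (matrix_of_prefix n len Q) k i j = Q k j - Q k (i - 1)"
  using assms(2)
proof (induction k)
  case 0
  then show ?case using assms(1) by simp
next
  case (Suc k)
  then show ?case
    using row_int_sum_row_of_prefix[OF assms(3-5)] by (simp add: matrix_of_prefix_def)
qed

lemma valid_matrix_matrix_of_prefix:
  assumes "1 \<le> len" "\<And>k m. k \<le> len \<Longrightarrow> \<bar>Q k m\<bar> \<le> K" "4 * K < 2 ^ b"
  shows "valid_matrix n b (matrix_of_prefix n len Q)"
  unfolding valid_matrix_def
proof (intro conjI ballI)
  show "matrix_of_prefix n len Q \<noteq> []"
    using assms(1) by (simp add: matrix_of_prefix_def)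
  fix row assume "row \<in> set (matrix_of_prefix n len Q)"
  then obtain t where row: "row = row_of_prefix n (\<lambda>m. Q (Suc t) m - Q t m)" "t < len"
    by (auto simp: matrix_of_prefix_def)
  then show "length row = n"
    by (simp add: row_of_prefix_def)
  have step_bound: "\<bar>Q (Suc t) m - Q t m\<bar> \<le> 2 * K" for m
    using assms(2)[of "Suc t" m] assms(2)[of t m] row(2) by linarith
  fix y assume "y \<in> set row"
  then have "\<bar>y\<bar> \<le> 2 * (2 * K)"
    using abs_le_row_of_prefix[OF step_bound] row(1) by simp
  then show "\<bar>y\<bar> < 2 ^ b"
    using assms(3) by linarith
qed

lemma card_bool_lists_shorter: "card {xs :: bool list. length xs < N} = 2 ^ N - 1"
proof -
  have "{xs :: bool list. length xs < N} = (\<Union>i<N. {xs. set xs \<subseteq> UNIV \<and> length xs = i})"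
    by auto
  also have "card \<dots> = (\<Sum>i<N. 2 ^ i)"
    using card_lists_length_eq[of "UNIV :: bool set"] finite_lists_length_eq[of "UNIV :: bool set"]
    by (subst card_UN_disjoint) auto
  also have "\<dots> = 2 ^ N - 1"
    by (simp add: sum_power2 atLeast0LessThan[symmetric])
  finally show ?thesis .
qed

lemma finite_bool_lists_shorter: "finite {xs :: bool list. length xs < N}"
  using finite_lists_length_le[of "UNIV :: bool set" N] by (rule rev_finite_subset) auto

lemma inj_on_bool_lists_long:
  fixes f :: "'a \<Rightarrow> bool list"
  assumes "inj_on f X" "finite X" "2 ^ N \<le> card X"
  shows "\<exists>x\<in>X. N \<le> length (f x)"
proof (rule ccontr)
  assume "\<not> ?thesis"
  then have "f ` X \<subseteq> {xs. length xs < N}"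
    by auto
  then have "card (f ` X) \<le> 2 ^ N - 1"
    using card_mono[OF finite_bool_lists_shorter] card_bool_lists_shorter by metis
  moreover have "card (f ` X) = card X"
    by (rule card_image[OF assms(1)])
  moreover have "0 < (2::nat) ^ N" by simp
  ultimately show False
    using assms(3) by linarith
qed

lemma divide_conquer_inj_on:
  assumes dc: "divide_conquer n b s join"
    and valid: "\<And>x. x \<in> X \<Longrightarrow> valid_matrix n b (A x)"
    and separating: "\<And>x y. x \<in> X \<Longrightarrow> y \<in> X \<Longrightarrow> x \<noteq> y \<Longrightarrow>
      \<exists>B. valid_matrix n b B \<and> mu n (B @ A x) \<noteq> mu n (B @ A y)"
  shows "inj_on (\<lambda>x. s (A x)) X"
proof (rule inj_onI, rule ccontr)
  note join_law = conjunct1[OF dc[unfolded divide_conquer_def], rule_format]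
    and mu_law = conjunct2[OF dc[unfolded divide_conquer_def], rule_format]
  fix x y assume x: "x \<in> X" and y: "y \<in> X" and same: "s (A x) = s (A y)" and "x \<noteq> y"
  then obtain B where B: "valid_matrix n b B" "mu n (B @ A x) \<noteq> mu n (B @ A y)"
    using separating by blast
  have "s (B @ A x) = s (B @ A y)"
    using join_law[OF B(1) valid[OF x]] join_law[OF B(1) valid[OF y]] same by simp
  then have "mu n (B @ A x) = mu n (B @ A y)"
    by (rule mu_law[OF valid_matrix_append[OF B(1) valid[OF x]]
          valid_matrix_append[OF B(1) valid[OF y]]])
  with B(2) show False ..
qed

(* The pair (a, b) stands for the column interval [a+1 : b]. *)
definition index_pairs :: "nat \<Rightarrow> (nat \<times> nat) set" where
  "index_pairs n = {(a, b). a < b \<and> b \<le> n}"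

lemma finite_index_pairs: "finite (index_pairs n)"
  by (rule finite_subset[of _ "{..n} \<times> {..n}"]) (auto simp: index_pairs_def)

lemma card_index_pairs: "card (index_pairs n) = n * (n + 1) div 2"
proof -
  have "2 * card (index_pairs n) = n * (n + 1)"
  proof (induction n)
    case 0
    have "index_pairs 0 = {}" by (auto simp: index_pairs_def)
    then show ?case by simp
  next
    case (Suc n)
    have "index_pairs (Suc n) = index_pairs n \<union> (\<lambda>a. (a, Suc n)) ` {..n}"
      by (auto simp: index_pairs_def)
    moreover have "index_pairs n \<inter> (\<lambda>a. (a, Suc n)) ` {..n} = {}"
      by (auto simp: index_pairs_def)
    moreover have "card ((\<lambda>a. (a, Suc n)) ` {..n}) = Suc n"
      by (simp add: card_image inj_on_def)
    ultimately have "card (index_pairs (Suc n)) = card (index_pairs n) + Suc n"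
      by (simp add: card_Un_disjoint[OF finite_index_pairs])
    then show ?case using Suc.IH by simp
  qed
  then show ?thesis by simp
qed

definition spike :: "nat \<times> nat \<Rightarrow> int \<Rightarrow> int \<Rightarrow> nat \<Rightarrow> int" where
  "spike P u v m = (if m = snd P then u else 0) - (if m = fst P then v else 0)"

lemma spike_diff_own: "fst P < snd P \<Longrightarrow> spike P u v (snd P) - spike P u v (fst P) = u + v"
  by (simp add: spike_def)

lemma spike_diff_other:
  "fst P < snd P \<Longrightarrow> i < j \<Longrightarrow> (i, j) \<noteq> P \<Longrightarrow> 0 \<le> v \<Longrightarrow> v \<le> u \<Longrightarrow>
    spike P u v j - spike P u v i \<le> u"
  by (cases P) (auto simp: spike_def)

lemma abs_spike_le: "0 \<le> u \<Longrightarrow> 0 \<le> v \<Longrightarrow> \<bar>spike P u v m\<bar> \<le> u + v"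
  by (auto simp: spike_def)

lemma twelve_times_power_less:
  assumes "1 \<le> k"
  shows "12 * 2 ^ k < (2::int) ^ (5 * k)"
proof -
  have "(2::int) ^ (k + 4) \<le> 2 ^ (5 * k)"
    using assms by (intro power_increasing) auto
  moreover have "(2::int) ^ (k + 4) = 16 * 2 ^ k"
    by (simp add: power_add)
  moreover have "(0::int) < 2 ^ k" by simp
  ultimately show ?thesis by linarith
qed

definition code_prefix ::
  "nat \<Rightarrow> (nat \<Rightarrow> nat \<times> nat) \<Rightarrow> (nat \<Rightarrow> nat) \<Rightarrow> nat \<Rightarrow> nat \<Rightarrow> int" where
  "code_prefix k p x s =
    (if s = 0 then (\<lambda>_. 0) else spike (p (s - 1)) (2 ^ k + int (x (s - 1))) (2 ^ k))"

definition code_matrix ::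
  "nat \<Rightarrow> nat \<Rightarrow> nat \<Rightarrow> (nat \<Rightarrow> nat \<times> nat) \<Rightarrow> (nat \<Rightarrow> nat) \<Rightarrow> int list list" where
  "code_matrix n r k p x = matrix_of_prefix n r (code_prefix k p x)"

lemma length_code_matrix [simp]: "length (code_matrix n r k p x) = r"
  by (simp add: code_matrix_def)

definition probe_row :: "nat \<Rightarrow> nat \<Rightarrow> nat \<times> nat \<Rightarrow> int list" where
  "probe_row n k P = row_of_prefix n (spike P (2 * 2 ^ k) (2 * 2 ^ k))"

lemma valid_probe_row:
  assumes "1 \<le> k"
  shows "valid_matrix n (5 * k) [probe_row n k P]"
proof -
  have "\<bar>spike P (2 * 2 ^ k) (2 * 2 ^ k) m\<bar> \<le> 4 * 2 ^ k" for m
    using abs_spike_le[of "2 * 2 ^ k" "2 * 2 ^ k" P m] by simp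
  moreover have "(0::int) < 2 ^ k" by simp
  then have "2 * (4 * 2 ^ k) < (2::int) ^ (5 * k)"
    using twelve_times_power_less[OF assms] by linarith
  ultimately show ?thesis
    unfolding probe_row_def by (rule valid_matrix_row_of_prefix)
qed

locale interval_encoding =
  fixes n r k :: nat and p :: "nat \<Rightarrow> nat \<times> nat" and x :: "nat \<Rightarrow> nat"
  assumes pair: "\<And>t. t < r \<Longrightarrow> fst (p t) < snd (p t) \<and> snd (p t) \<le> n"
    and inj_pairs: "inj_on p {..<r}"
    and digit: "\<And>t. t < r \<Longrightarrow> x t < 2 ^ k"
begin

lemma digit_int: "t < r \<Longrightarrow> int (x t) < 2 ^ k"
  using digit[of t] by (metis of_nat_less_iff of_nat_numeral of_nat_power)

lemma code_prefix_Suc: "code_prefix k p x (Suc s) = spike (p s) (2 ^ k + int (x s)) (2 ^ k)"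
  by (simp add: code_prefix_def)

lemma code_prefix_diff_le:
  assumes "s \<le> r" "i < j"
  shows "code_prefix k p x s j - code_prefix k p x s i < 3 * 2 ^ k"
proof (cases s)
  case 0
  then show ?thesis by (simp add: code_prefix_def)
next
  case (Suc s')
  then have s': "s' < r" using assms(1) by simp
  have "spike (p s') (2 ^ k + int (x s')) (2 ^ k) j - spike (p s') (2 ^ k + int (x s')) (2 ^ k) i
      \<le> 2 * 2 ^ k + int (x s')"
  proof (cases "(i, j) = p s'")
    case True
    then have "i = fst (p s')" "j = snd (p s')"
      by (metis fst_conv, metis snd_conv)
    then show ?thesis using spike_diff_own[of "p s'"] pair[OF s'] by simp
  next
    case False
    then have "spike (p s') (2 ^ k + int (x s')) (2 ^ k) j -
        spike (p s') (2 ^ k + int (x s')) (2 ^ k) i \<le> 2 ^ k + int (x s')"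
      using pair[OF s'] assms(2) by (intro spike_diff_other) auto
    moreover have "(0::int) \<le> 2 ^ k" by simp
    ultimately show ?thesis by linarith
  qed
  then show ?thesis
    unfolding Suc code_prefix_Suc using digit_int[OF s'] by linarith
qed

lemma code_prefix_diff_own:
  assumes "t < r"
  shows "code_prefix k p x (Suc t) (snd (p t)) - code_prefix k p x (Suc t) (fst (p t)) =
    2 * 2 ^ k + int (x t)"
  using spike_diff_own pair[OF assms] by (simp add: code_prefix_Suc)

lemma code_prefix_diff_at_pair_le:
  assumes "s \<le> r" "t < r"
  shows "code_prefix k p x s (snd (p t)) - code_prefix k p x s (fst (p t)) \<le> 2 * 2 ^ k + int (x t)"
proof (cases s)
  case 0
  then show ?thesis by (simp add: code_prefix_def)
next
  case (Suc s')
  then have s': "s' < r" using assms(1) by simp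
  show ?thesis
  proof (cases "s' = t")
    case True
    then show ?thesis using code_prefix_diff_own[OF assms(2)] Suc by simp
  next
    case False
    then have "(fst (p t), snd (p t)) \<noteq> p s'"
      using inj_onD[OF inj_pairs] s' assms(2) by fastforce
    then have "spike (p s') (2 ^ k + int (x s')) (2 ^ k) (snd (p t)) -
        spike (p s') (2 ^ k + int (x s')) (2 ^ k) (fst (p t)) \<le> 2 ^ k + int (x s')"
      using pair[OF s'] pair[OF assms(2)] by (intro spike_diff_other) auto
    then show ?thesis
      unfolding Suc code_prefix_Suc using digit_int[OF s'] by linarith
  qed
qed

lemma abs_code_prefix_le: "s \<le> r \<Longrightarrow> \<bar>code_prefix k p x s m\<bar> \<le> 3 * 2 ^ k"
proof (cases s)
  case (Suc s')
  assume "s \<le> r"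
  then have "int (x s') < 2 ^ k" using Suc digit_int by simp
  moreover have "\<bar>spike (p s') (2 ^ k + int (x s')) (2 ^ k) m\<bar> \<le> 2 ^ k + int (x s') + 2 ^ k"
    by (rule abs_spike_le) auto
  ultimately show ?thesis
    unfolding Suc code_prefix_Suc by linarith
qed (simp add: code_prefix_def)

lemma valid_code_matrix:
  assumes "1 \<le> k" "1 \<le> r"
  shows "valid_matrix n (5 * k) (code_matrix n r k p x)"
  unfolding code_matrix_def
proof (rule valid_matrix_matrix_of_prefix[OF assms(2) abs_code_prefix_le])
  show "4 * (3 * 2 ^ k) < (2::int) ^ (5 * k)"
    using twelve_times_power_less[OF assms(1)] by simp
qed

lemma top_sum_code_matrix:
  assumes "s \<le> r" "1 \<le> i" "i \<le> j" "j \<le> n"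
  shows "top_sum (code_matrix n r k p x) s i j = code_prefix k p x s j - code_prefix k p x s (i - 1)"
  unfolding code_matrix_def
  by (rule top_sum_matrix_of_prefix[OF _ assms]) (simp add: code_prefix_def fun_eq_iff)

lemma mu_probe_code_matrix:
  assumes t: "t < r"
  shows "mu n (probe_row n k (p t) # code_matrix n r k p x) = 6 * 2 ^ k + int (x t)"
proof -
  let ?A = "probe_row n k (p t) # code_matrix n r k p x"
  let ?probe = "spike (p t) (2 * 2 ^ k) (2 * 2 ^ k)"
  have pt: "fst (p t) < snd (p t)" "snd (p t) \<le> n" using pair[OF t] by auto
  have top_sum_eq: "top_sum ?A (Suc s) i j =
      (?probe j - ?probe (i - 1)) + (code_prefix k p x s j - code_prefix k p x s (i - 1))"
    if "s \<le> r" "1 \<le> i" "i \<le> j" "j \<le> n" for s i j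
    unfolding top_sum_Cons probe_row_def
    using top_sum_code_matrix[OF that] row_int_sum_row_of_prefix[OF that(2-4)] by simp
  have probe_own: "?probe (snd (p t)) - ?probe (fst (p t)) = 4 * 2 ^ k"
    using spike_diff_own[OF pt(1)] by simp
  show ?thesis
  proof (rule mu_eqI[where k' = "Suc (Suc t)" and i' = "Suc (fst (p t))" and j' = "snd (p t)"])
    show "top_sum ?A (Suc (Suc t)) (Suc (fst (p t))) (snd (p t)) = 6 * 2 ^ k + int (x t)"
      using top_sum_eq[of "Suc t" "Suc (fst (p t))" "snd (p t)"] t pt probe_own
        code_prefix_diff_own[OF t] by simp
  next
    fix s' i j
    assume s': "1 \<le> s'" "s' \<le> length ?A" and ij: "1 \<le> i" "i \<le> j" "j \<le> n"
    then obtain s where s: "s' = Suc s" "s \<le> r" by (cases s') auto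
    show "top_sum ?A s' i j \<le> 6 * 2 ^ k + int (x t)"
    proof (cases "(i - 1, j) = p t")
      case True
      then have "i - 1 = fst (p t)" "j = snd (p t)" by (metis fst_conv, metis snd_conv)
      then show ?thesis
        using top_sum_eq[OF s(2) ij] probe_own code_prefix_diff_at_pair_le[OF s(2) t]
        unfolding s(1) by simp
    next
      case False
      have "?probe j - ?probe (i - 1) \<le> 2 * 2 ^ k"
        using False ij pt by (intro spike_diff_other) auto
      moreover have "code_prefix k p x s j - code_prefix k p x s (i - 1) < 3 * 2 ^ k"
        using ij by (intro code_prefix_diff_le[OF s(2)]) auto
      moreover have "(0::int) \<le> 2 ^ k" by simp
      ultimately show ?thesis
        using top_sum_eq[OF s(2) ij] unfolding s(1) by linarith
    qed
  qed (use t pt in auto)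
qed

end

lemma interval_encoding_PiE:
  assumes "p ` {..<r} \<subseteq> index_pairs n" "inj_on p {..<r}"
    and "x \<in> PiE {..<r} (\<lambda>_. {..<(2::nat) ^ k})"
  shows "interval_encoding n r k p x"
  using assms by unfold_locales (auto simp: index_pairs_def PiE_iff)

lemma divide_conquer_inj_on_code_matrices:
  assumes dc: "divide_conquer n (5 * k) s join" and k: "1 \<le> k" and r: "1 \<le> r"
    and p: "p ` {..<r} \<subseteq> index_pairs n" "inj_on p {..<r}"
  shows "inj_on (\<lambda>x. s (code_matrix n r k p x)) (PiE {..<r} (\<lambda>_. {..<(2::nat) ^ k}))"
proof (rule divide_conquer_inj_on[OF dc])
  note code = interval_encoding_PiE[OF p]
  show "valid_matrix n (5 * k) (code_matrix n r k p x)"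
    if "x \<in> PiE {..<r} (\<lambda>_. {..<(2::nat) ^ k})" for x
    using interval_encoding.valid_code_matrix[OF code[OF that] k r] .
  fix x y
  assume x: "x \<in> PiE {..<r} (\<lambda>_. {..<(2::nat) ^ k})"
    and y: "y \<in> PiE {..<r} (\<lambda>_. {..<(2::nat) ^ k})" and "x \<noteq> y"
  then obtain t where t: "t < r" "x t \<noteq> y t"
    by (metis PiE_ext lessThan_iff)
  show "\<exists>B. valid_matrix n (5 * k) B \<and>
      mu n (B @ code_matrix n r k p x) \<noteq> mu n (B @ code_matrix n r k p y)"
    using valid_probe_row[OF k] t
      interval_encoding.mu_probe_code_matrix[OF code[OF x] t(1)]
      interval_encoding.mu_probe_code_matrix[OF code[OF y] t(1)]
    by (intro exI[of _ "[probe_row n k (p t)]"]) simp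
qed

theorem theorem6p7:
  shows "\<exists>C::nat. C \<ge> 1 \<and> (\<exists>c::real. c > 0 \<and>
    (\<forall>n k r (s :: int list list \<Rightarrow> bool list) join.
       n \<ge> 1 \<longrightarrow> k \<ge> 1 \<longrightarrow> 1 \<le> r \<longrightarrow> r \<le> n * (n + 1) div 2 \<longrightarrow>
       divide_conquer n (C * k) s join \<longrightarrow>
       (\<exists>A. valid_matrix n (C * k) A \<and> length A = r \<and>
            real (length (s A)) \<ge> c * real k * real r)))"
proof (intro exI[of _ "5::nat"] conjI exI[of _ "1::real"] allI impI)
  fix n k r :: nat and s :: "int list list \<Rightarrow> bool list" and join
  assume k: "1 \<le> k" and r: "1 \<le> r" and "r \<le> n * (n + 1) div 2"
    and dc: "divide_conquer n (5 * k) s join"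
  then have "card {..<r} \<le> card (index_pairs n)"
    by (simp add: card_index_pairs)
  then obtain p where p: "p ` {..<r} \<subseteq> index_pairs n" "inj_on p {..<r}"
    by (meson card_le_inj finite_index_pairs finite_lessThan)
  have "2 ^ (k * r) \<le> card (PiE {..<r} (\<lambda>_. {..<(2::nat) ^ k}))"
    by (simp add: card_PiE power_mult)
  then obtain x where x: "x \<in> PiE {..<r} (\<lambda>_. {..<(2::nat) ^ k})"
    and long: "k * r \<le> length (s (code_matrix n r k p x))"
    using inj_on_bool_lists_long[OF divide_conquer_inj_on_code_matrices[OF dc k r p]]
    by (auto simp: finite_PiE)
  have "real k * real r \<le> real (length (s (code_matrix n r k p x)))"
    using long by (metis of_nat_le_iff of_nat_mult)
  then show "\<exists>A. valid_matrix n (5 * k) A \<and> length A = r \<and>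
      1 * real k * real r \<le> real (length (s A))"
    using interval_encoding.valid_code_matrix[OF interval_encoding_PiE[OF p x] k r]
    by (intro exI[of _ "code_matrix n r k p x"]) simp
qed simp_all

end
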